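(* Let $\Omega\subset\mathbb{R}^2$ be open and bounded and let $(y^l)_l\subset L^1(\Omega)$ satisfy $\big|\Omega\setminus\bigcup_{n\in\mathbb{N}}\bigcap_{l\ge n}\{|y^n-y^l|\le1\}\big|=0$. Then there is a (not relabeled) subsequence and an increasing continuous function $\psi:[0,\infty)\to[0,\infty)$ with $\lim_{t\to\infty}\psi(t)=\infty$ such that $\int_\Omega\psi(|y^l|)\le C$ for a constant $C>0$ independent of $l$.
   Context: $|\cdot|$ denotes Lebesgue measure. *)

theory Defs
  imports "HOL-Analysis.Analysis"
begin

end

theory Submission imports Defs "HOL-Analysis.Analysis" begin

text \<open>
  The hypothesis says that for almost every \<open>x \<in> \<Omega>\<close> the values \<open>y l x\<close> eventually stay within
  distance 1 of some \<open>y n x\<close>, so \<open>sup\<^sub>l \<bar>y l x\<bar> < \<infinity>\<close> almost everywhere on \<Omega>. As \<Omega> has finite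
  measure, the sets \<open>A m = {x \<in> \<Omega>. \<exists>l. m < \<bar>y l x\<bar>}\<close> have measure tending to 0, and we can pick
  thresholds \<open>c k \<ge> k\<close> with \<open>|A (c k)| < 2\<^sup>-\<^sup>k\<close>. The function \<open>\<psi> = \<Sum>\<^sub>k ramp (c k)\<close>, where
  \<open>ramp c\<close> climbs from 0 to 1 on \<open>[c, c + 1]\<close>, is continuous, increasing and unbounded, and
  \<open>\<psi> (\<bar>y l x\<bar>) \<le> \<Sum>\<^sub>k \<one>\<^bsub>A (c k)\<^esub> x\<close>; integrating gives the uniform bound 2. No subsequence is needed.
\<close>

definition ramp :: "real \<Rightarrow> real \<Rightarrow> real" where
  "ramp c t = min 1 (max 0 (t - c))"

lemma continuous_on_ramp: "continuous_on S (ramp c)"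
  unfolding ramp_def by (intro continuous_intros)

lemma ramp_nonneg: "0 \<le> ramp c t" and ramp_le_1: "ramp c t \<le> 1"
  by (auto simp: ramp_def)

lemma ramp_mono: "s \<le> t \<Longrightarrow> ramp c s \<le> ramp c t"
  by (auto simp: ramp_def)

lemma ramp_eq_0: "t \<le> c \<Longrightarrow> ramp c t = 0"
  by (auto simp: ramp_def)

lemma ramp_eq_1: "c + 1 \<le> t \<Longrightarrow> ramp c t = 1"
  by (auto simp: ramp_def)

definition ramp_series :: "(nat \<Rightarrow> real) \<Rightarrow> real \<Rightarrow> real" where
  "ramp_series c t = (\<Sum>k. ramp (c k) t)"

text \<open>Throughout, \<open>real k \<le> c k\<close> makes the series a finite sum on every bounded interval.\<close>

lemma ramp_series_eq_sum:
  assumes c: "\<And>k. real k \<le> c k" and t: "t \<le> real K"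
  shows "summable (\<lambda>k. ramp (c k) t)" and "ramp_series c t = (\<Sum>k<K. ramp (c k) t)"
proof -
  have zero: "ramp (c k) t = 0" if "k \<notin> {..<K}" for k
    using that c[of k] t by (intro ramp_eq_0) auto
  show "summable (\<lambda>k. ramp (c k) t)"
    by (rule summable_finite[of "{..<K}"]) (use zero in auto)
  show "ramp_series c t = (\<Sum>k<K. ramp (c k) t)"
    unfolding ramp_series_def by (rule suminf_finite) (use zero in auto)
qed

lemma summable_ramp:
  assumes "\<And>k. real k \<le> c k"
  shows "summable (\<lambda>k. ramp (c k) t)"
  using ramp_series_eq_sum(1)[OF assms, of t "nat \<lceil>t\<rceil>"] by linarith

lemma continuous_on_ramp_series:
  assumes c: "\<And>k. real k \<le> c k"
  shows "continuous_on S (ramp_series c)"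
proof -
  have "continuous_on (\<Union>K. {..<real K}) (ramp_series c)"
  proof (rule continuous_on_open_UN)
    fix K :: nat
    have "continuous_on {..<real K} (\<lambda>t. \<Sum>k<K. ramp (c k) t)"
      by (intro continuous_intros continuous_on_ramp)
    then show "continuous_on {..<real K} (ramp_series c)"
      by (rule continuous_on_eq) (use ramp_series_eq_sum(2)[OF c, of _ K] in force)
  qed simp
  moreover have "(\<Union>K. {..<real K}) = UNIV"
    using reals_Archimedean2 by auto
  ultimately show ?thesis
    using continuous_on_subset by fastforce
qed

lemma ramp_series_mono:
  assumes "\<And>k. real k \<le> c k" and "s \<le> t"
  shows "ramp_series c s \<le> ramp_series c t"
  unfolding ramp_series_def by (intro suminf_le summable_ramp ramp_mono assms)

lemma ramp_series_nonneg:
  assumes "\<And>k. real k \<le> c k"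
  shows "0 \<le> ramp_series c t"
  unfolding ramp_series_def by (intro suminf_nonneg summable_ramp ramp_nonneg assms)

lemma filterlim_ramp_series_at_top:
  assumes c: "\<And>k. real k \<le> c k"
  shows "filterlim (ramp_series c) at_top at_top"
  unfolding filterlim_at_top eventually_at_top_linorder
proof
  fix Z :: real
  define K where "K = nat \<lceil>Z\<rceil>"
  have "Z \<le> ramp_series c t" if t: "(\<Sum>k<K. c k) + 1 \<le> t" for t
  proof -
    have "c k \<le> (\<Sum>k<K. c k)" if "k < K" for k
      using that c by (intro member_le_sum) (auto intro: order_trans[OF of_nat_0_le_iff])
    then have "c k + 1 \<le> t" if "k < K" for k
      using that t by fastforce
    then have "(\<Sum>k<K. ramp (c k) t) = real K"
      using t by (simp add: ramp_eq_1)
    moreover have "(\<Sum>k<K. ramp (c k) t) \<le> ramp_series c t"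
      unfolding ramp_series_def by (intro sum_le_suminf summable_ramp c) (auto simp: ramp_nonneg)
    ultimately show ?thesis
      unfolding K_def by linarith
  qed
  then show "\<exists>t0. \<forall>t\<ge>t0. Z \<le> ramp_series c t"
    by blast
qed

lemma nn_integral_ramp_series_le:
  assumes c: "\<And>k. real k \<le> c k"
    and B: "\<And>k. B k \<in> sets M" "\<And>k x. x \<in> \<Omega> \<Longrightarrow> c k < g x \<Longrightarrow> x \<in> B k"
  shows "(\<integral>\<^sup>+ x\<in>\<Omega>. ennreal (ramp_series c (g x)) \<partial>M) \<le> (\<Sum>k. emeasure M (B k))"
proof -
  have "ennreal (ramp (c k) (g x)) \<le> indicator (B k) x" if "x \<in> \<Omega>" for k x
    using B(2)[OF that, of k] by (cases "c k < g x") (auto simp: ramp_le_1 ramp_eq_0)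
  moreover have "ennreal (ramp_series c s) = (\<Sum>k. ennreal (ramp (c k) s))" for s
    unfolding ramp_series_def by (simp add: suminf_ennreal2 ramp_nonneg summable_ramp[OF c])
  ultimately have "ennreal (ramp_series c (g x)) * indicator \<Omega> x \<le> (\<Sum>k. indicator (B k) x)" for x
    by (cases "x \<in> \<Omega>") (auto intro: suminf_le)
  then have "(\<integral>\<^sup>+ x\<in>\<Omega>. ennreal (ramp_series c (g x)) \<partial>M) \<le> (\<integral>\<^sup>+ x. (\<Sum>k. indicator (B k) x) \<partial>M)"
    by (intro nn_integral_mono) auto
  also have "\<dots> = (\<Sum>k. emeasure M (B k))"
    using B(1) by (simp add: nn_integral_suminf)
  finally show ?thesis .
qed

lemma bounded_if_eventually_close:
  fixes a :: "nat \<Rightarrow> real"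
  assumes "\<And>l. n \<le> l \<Longrightarrow> \<bar>a n - a l\<bar> \<le> 1"
  shows "\<exists>B. \<forall>l. \<bar>a l\<bar> \<le> B"
proof -
  have "\<bar>a l\<bar> \<le> (\<Sum>i\<le>n. \<bar>a i\<bar>) + 1" for l
  proof (cases "l \<le> n")
    case True
    then show ?thesis
      using member_le_sum[of l "{..n}" "\<lambda>i. \<bar>a i\<bar>"] by auto
  next
    case False
    then show ?thesis
      using member_le_sum[of n "{..n}" "\<lambda>i. \<bar>a i\<bar>"] assms[of l] by auto
  qed
  then show ?thesis by blast
qed

lemma AE_bounded_if_eventually_close:
  fixes f :: "nat \<Rightarrow> 'a \<Rightarrow> real"
  assumes "\<Omega> - (\<Union>n. \<Inter>l\<in>{n..}. {x. \<bar>f n x - f l x\<bar> \<le> 1}) \<in> null_sets M"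
  shows "AE x in M. x \<in> \<Omega> \<longrightarrow> (\<exists>B. \<forall>l. \<bar>f l x\<bar> \<le> B)"
proof (rule AE_I'[OF assms], intro subsetI DiffI notI)
  fix x
  assume x: "x \<in> {x\<in>space M. \<not> (x \<in> \<Omega> \<longrightarrow> (\<exists>B. \<forall>l. \<bar>f l x\<bar> \<le> B))}"
  then show "x \<in> \<Omega>"
    by auto
  from x have unbounded: "\<not> (\<exists>B. \<forall>l. \<bar>f l x\<bar> \<le> B)"
    by auto
  assume "x \<in> (\<Union>n. \<Inter>l\<in>{n..}. {x. \<bar>f n x - f l x\<bar> \<le> 1})"
  then obtain n where "\<And>l. n \<le> l \<Longrightarrow> \<bar>f n x - f l x\<bar> \<le> 1"
    by auto
  then show False
    using bounded_if_eventually_close[of n "\<lambda>l. f l x"] unbounded by blast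
qed

lemma sets_exceeding:
  fixes f :: "nat \<Rightarrow> 'a \<Rightarrow> real"
  assumes "\<Omega> \<in> sets M" and "\<And>l. set_borel_measurable M \<Omega> (f l)"
  shows "{x\<in>\<Omega>. \<exists>l. a < \<bar>f l x\<bar>} \<in> sets M"
proof -
  have "{x\<in>\<Omega>. \<exists>l. a < \<bar>f l x\<bar>} = \<Omega> \<inter> (\<Union>l. {x\<in>space M. a < \<bar>indicator \<Omega> x *\<^sub>R f l x\<bar>})"
    using sets.sets_into_space[OF assms(1)] by auto
  then show ?thesis
    using assms unfolding set_borel_measurable_def by auto
qed

lemma emeasure_exceeding_tendsto_0:
  fixes f :: "nat \<Rightarrow> 'a \<Rightarrow> real"
  assumes \<Omega>: "\<Omega> \<in> sets M" "emeasure M \<Omega> \<noteq> \<infinity>"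
    and meas: "\<And>l. set_borel_measurable M \<Omega> (f l)"
    and bdd: "AE x in M. x \<in> \<Omega> \<longrightarrow> (\<exists>B. \<forall>l. \<bar>f l x\<bar> \<le> B)"
  shows "(\<lambda>m. emeasure M {x\<in>\<Omega>. \<exists>l. real m < \<bar>f l x\<bar>}) \<longlonglongrightarrow> 0"
proof -
  define A where "A m = {x\<in>\<Omega>. \<exists>l. real m < \<bar>f l x\<bar>}" for m :: nat
  have sets: "range A \<subseteq> sets M"
    using sets_exceeding[OF \<Omega>(1) meas] by (auto simp: A_def)
  have "decseq A"
    unfolding decseq_def A_def
    by (auto simp del: of_nat_le_iff) (meson le_less_trans of_nat_le_iff)
  moreover have "emeasure M (A m) \<noteq> \<infinity>" for m
    using emeasure_mono[of "A m" \<Omega> M] \<Omega> by (auto simp: A_def top_unique)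
  moreover have "emeasure M (\<Inter>m. A m) = 0"
  proof -
    have "AE x in M. x \<notin> (\<Inter>m. A m)"
      using bdd
    proof eventually_elim
      case (elim x)
      show ?case
      proof
        assume x: "x \<in> (\<Inter>m. A m)"
        then obtain B where B: "\<And>l. \<bar>f l x\<bar> \<le> B"
          using elim by (auto simp: A_def)
        obtain l where "real (nat \<lceil>B\<rceil>) < \<bar>f l x\<bar>"
          using x by (auto simp: A_def)
        then show False
          using B[of l] real_nat_ceiling_ge[of B] by linarith
      qed
    qed
    moreover have "(\<Inter>m. A m) \<in> sets M"
      using sets by auto
    ultimately show ?thesis
      using AE_iff_measurable[of "\<Inter>m. A m" M "\<lambda>x. x \<notin> (\<Inter>m. A m)"]
        sets.sets_into_space by blast
  qed
  ultimately show ?thesis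
    using Lim_emeasure_decseq[OF sets] unfolding A_def by metis
qed

lemma emeasure_tendsto_0_obtain_thresholds:
  assumes "(\<lambda>m. emeasure M (A m)) \<longlonglongrightarrow> 0"
  obtains t where "\<And>k. k \<le> t k" and "\<And>k. emeasure M (A (t k)) < ennreal ((1/2)^k)"
proof -
  have "\<exists>m. k \<le> m \<and> emeasure M (A m) < ennreal ((1/2)^k)" for k
  proof -
    have "eventually (\<lambda>m. emeasure M (A m) < ennreal ((1/2)^k)) sequentially"
      by (rule order_tendstoD(2)[OF assms]) simp
    then obtain m0 where "\<And>m. m0 \<le> m \<Longrightarrow> emeasure M (A m) < ennreal ((1/2)^k)"
      unfolding eventually_sequentially by blast
    then show ?thesis
      by (intro exI[of _ "max m0 k"]) auto
  qed
  then show ?thesis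
    using that by metis
qed

lemma obtain_ramp_series_uniform_bound:
  fixes f :: "nat \<Rightarrow> 'a \<Rightarrow> real"
  assumes \<Omega>: "\<Omega> \<in> sets M" "emeasure M \<Omega> \<noteq> \<infinity>"
    and meas: "\<And>l. set_borel_measurable M \<Omega> (f l)"
    and bdd: "AE x in M. x \<in> \<Omega> \<longrightarrow> (\<exists>B. \<forall>l. \<bar>f l x\<bar> \<le> B)"
  obtains c where "\<And>k. real k \<le> c k"
    and "\<And>l. (\<integral>\<^sup>+ x\<in>\<Omega>. ennreal (ramp_series c \<bar>f l x\<bar>) \<partial>M) \<le> ennreal 2"
proof -
  obtain t where t: "\<And>k. k \<le> t k"
    "\<And>k. emeasure M {x\<in>\<Omega>. \<exists>l. real (t k) < \<bar>f l x\<bar>} < ennreal ((1/2)^k)"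
    by (rule emeasure_tendsto_0_obtain_thresholds[OF emeasure_exceeding_tendsto_0[OF \<Omega> meas bdd]]) blast
  define c where "c k = real (t k)" for k
  have c: "real k \<le> c k" for k
    using t(1)[of k] by (simp add: c_def)
  have bound: "(\<integral>\<^sup>+ x\<in>\<Omega>. ennreal (ramp_series c \<bar>f l x\<bar>) \<partial>M) \<le> ennreal 2" for l
  proof -
    have "(\<integral>\<^sup>+ x\<in>\<Omega>. ennreal (ramp_series c \<bar>f l x\<bar>) \<partial>M)
        \<le> (\<Sum>k. emeasure M {x\<in>\<Omega>. \<exists>l. real (t k) < \<bar>f l x\<bar>})"
      using c by (intro nn_integral_ramp_series_le sets_exceeding[OF \<Omega>(1) meas]) (auto simp: c_def)
    also have "\<dots> \<le> (\<Sum>k. ennreal ((1/2)^k))"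
      using t(2) by (intro suminf_le less_imp_le) simp_all
    also have "\<dots> = ennreal 2"
      using suminf_geometric[of "1/2::real"] by (simp add: suminf_ennreal2)
    finally show ?thesis .
  qed
  show ?thesis
    by (rule that[OF c bound])
qed

theorem lemma4p2:
  fixes \<Omega> :: "(real^2) set" and y :: "nat \<Rightarrow> real^2 \<Rightarrow> real"
  assumes "open \<Omega>" and "bounded \<Omega>"
    and "\<And>l. set_integrable lebesgue \<Omega> (y l)"
    and "\<Omega> - (\<Union>n. \<Inter>l\<in>{n..}. {x. \<bar>y n x - y l x\<bar> \<le> 1}) \<in> null_sets lebesgue"
  shows "\<exists>(r::nat \<Rightarrow> nat) (\<psi>::real \<Rightarrow> real) (C::real). strict_mono r
           \<and> continuous_on {0..} \<psi> \<and> mono_on {0..} \<psi> \<and> \<psi> ` {0..} \<subseteq> {0..}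
           \<and> filterlim \<psi> at_top at_top
           \<and> C > 0
           \<and> (\<forall>l. (\<integral>\<^sup>+ x\<in>\<Omega>. ennreal (\<psi> \<bar>y (r l) x\<bar>) \<partial>lebesgue) \<le> ennreal C)"
proof -
  have \<Omega>: "\<Omega> \<in> sets lebesgue" "emeasure lebesgue \<Omega> \<noteq> \<infinity>"
    using lmeasurable_open[OF assms(2,1)] by (auto simp: fmeasurable_def)
  have meas: "set_borel_measurable lebesgue \<Omega> (y l)" for l
    using assms(3)[of l] unfolding set_borel_measurable_def set_integrable_def by simp
  obtain c where c: "\<And>k. real k \<le> c k"
    and bound: "\<And>l. (\<integral>\<^sup>+ x\<in>\<Omega>. ennreal (ramp_series c \<bar>y l x\<bar>) \<partial>lebesgue) \<le> ennreal 2"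
    by (rule obtain_ramp_series_uniform_bound[OF \<Omega> meas AE_bounded_if_eventually_close[OF assms(4)]]) blast
  show ?thesis
  proof (intro exI conjI allI)
    show "strict_mono (id :: nat \<Rightarrow> nat)"
      by (simp add: strict_mono_def)
    show "continuous_on {0..} (ramp_series c)"
      by (rule continuous_on_ramp_series[OF c])
    show "mono_on {0..} (ramp_series c)"
      by (intro mono_onI ramp_series_mono[OF c])
    show "ramp_series c ` {0..} \<subseteq> {0..}"
      using ramp_series_nonneg[OF c] by auto
    show "filterlim (ramp_series c) at_top at_top"
      by (rule filterlim_ramp_series_at_top[OF c])
    show "(0::real) < 2"
      by simp
    show "(\<integral>\<^sup>+ x\<in>\<Omega>. ennreal (ramp_series c \<bar>y (id l) x\<bar>) \<partial>lebesgue) \<le> ennreal 2" for l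
      using bound by simp
  qed
qed

end
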